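(* Suppose $(\varepsilon,\beta,\gamma;(12))\in\mathrm{Par}(n)$. Fix an integer $d>1$, and let $r$ be the number of cycles of $\beta$ of length $d$; suppose $r$ is odd. Let $\Gamma$ be the set of all cycles $C$ of $\gamma$ (including fixed points as cycles of length $1$) satisfying all of: <ul> <li>(i) $o(C)$ is an odd divisor of $d$;</li> <li>(ii) $\beta$ has no cycle $C'$ with $1<o(C')<d$ and $\operatorname{lcm}(o(C),o(C'))=d$;</li> <li>(iii) if the number of fixed points of $\beta$ is odd, then $o(C)<d$.</li> </ul> Then $\Gamma=\emptyset$ if $d$ is even, and $|\Gamma|\le r$ if $d$ is odd.
   Context: A Latin square of order $n$ is an $n\times n$ array with rows, columns and symbols indexed by $[n]$, each symbol occurring once in each row and each column, with triple set $O(L)$. Permutations act on the right; $\varepsilon$ is the identity. $o(C)$ is the length of a cycle $C$. A paratopism $(\alpha,\beta,\gamma;(12))$ maps $L$ to $L^\sigma$ with triple set $\{(y\beta,x\alpha,z\gamma):(x,y,z)\in O(L)\}$; it is an autoparatopism of $L$ if $L^\sigma=L$. $\mathrm{Par}(n)$ is the set of paratopisms that are autoparatopisms of at least one Latin square of order $n$. *)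

theory Defs
  imports "HOL-Combinatorics.Permutations" "HOL-Combinatorics.Orbits"
begin

text \<open>Rows, columns and symbols are indexed by [n] = {0..<n}.
  A Latin square of order n is given by its triple set O(L).\<close>

definition latin_square :: "nat \<Rightarrow> (nat \<times> nat \<times> nat) set \<Rightarrow> bool" where
  "latin_square n T \<longleftrightarrow>
     T \<subseteq> {..<n} \<times> {..<n} \<times> {..<n} \<and>
     (\<forall>x<n. \<forall>y<n. \<exists>!z. (x, y, z) \<in> T) \<and>
     (\<forall>x<n. \<forall>z<n. \<exists>!y. (x, y, z) \<in> T) \<and>
     (\<forall>y<n. \<forall>z<n. \<exists>!x. (x, y, z) \<in> T)"

text \<open>Image of a triple set under the paratopism (alpha, beta, gamma; (12)).
  Permutations act on the right, so x alpha is written alpha x.\<close>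

definition paratopism12_image ::
  "(nat \<Rightarrow> nat) \<Rightarrow> (nat \<Rightarrow> nat) \<Rightarrow> (nat \<Rightarrow> nat) \<Rightarrow> (nat \<times> nat \<times> nat) set \<Rightarrow> (nat \<times> nat \<times> nat) set" where
  "paratopism12_image \<alpha> \<beta> \<gamma> T = {(\<beta> y, \<alpha> x, \<gamma> z) | x y z. (x, y, z) \<in> T}"

definition in_Par12 :: "nat \<Rightarrow> (nat \<Rightarrow> nat) \<Rightarrow> (nat \<Rightarrow> nat) \<Rightarrow> (nat \<Rightarrow> nat) \<Rightarrow> bool" where
  "in_Par12 n \<alpha> \<beta> \<gamma> \<longleftrightarrow>
     \<alpha> permutes {..<n} \<and> \<beta> permutes {..<n} \<and> \<gamma> permutes {..<n} \<and>
     (\<exists>T. latin_square n T \<and> paratopism12_image \<alpha> \<beta> \<gamma> T = T)"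

text \<open>The cycles of a permutation of [n] (fixed points included), as orbit sets;
  the length o(C) of a cycle C is card C.\<close>

definition perm_cycles :: "nat \<Rightarrow> (nat \<Rightarrow> nat) \<Rightarrow> nat set set" where
  "perm_cycles n f = (\<lambda>x. orbit f x) ` {..<n}"

end

(*
  Let \<sigma> = (\<epsilon>, \<beta>, \<gamma>; (12)) be an autoparatopism of L, so that \<sigma>^2 = (\<beta>, \<beta>, \<gamma>^2), and let
  z0 lie on a cycle of \<gamma> of odd length c dividing d, with k = d / c. Then \<sigma>^c fixes z0 and
  permutes the cells holding z0, inducing a permutation \<tau> of the rows with \<tau>^2 = \<beta>^c. By (ii),
  the rows of exact period k under \<beta>^c are the points on \<beta>-cycles of length d, plus the fixed
  points of \<beta> when c = d; \<tau> preserves this set U, and |U| = r d (+ the number of fixed points).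

  If d is even then so is k, every \<tau>-orbit in U has length 2k, and 2k divides r c k, which
  contradicts r and c being odd. If d is odd, |U| is odd by (iii), so the involution \<tau>^k has a
  fixed row x in U. Its z0-cell (x, y, z0) satisfies x = \<beta>^((d+1)/2) y, and x lies on a \<beta>-cycle
  of length d (a fixed point of \<beta> would force c = 1). Two such cells whose rows share a \<beta>-cycle
  have symbols on a common \<gamma>-cycle, so this assigns the cycles in \<Gamma> injectively to \<beta>-cycles
  of length d.
*)

theory Submission
  imports Defs "HOL-Combinatorics.Cycles"
begin

definition exact_period :: "('a \<Rightarrow> 'a) \<Rightarrow> nat \<Rightarrow> 'a \<Rightarrow> bool" where
  "exact_period f p x \<longleftrightarrow> (\<forall>j. (f ^^ j) x = x \<longleftrightarrow> p dvd j)"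

lemma funpow_apply_funpow: "(f ^^ m) ((f ^^ k) x) = (f ^^ (m + k)) x"
  by (simp add: funpow_add)

lemma orbit_eq_if_mem:
  assumes "x \<in> orbit f x" "y \<in> orbit f x"
  shows "orbit f y = orbit f x"
  using assms by (intro orbit_cyclic_eq3) (auto simp: cyclic_on_def)

lemma self_in_orbit_if_funpow_eq:
  assumes "(f ^^ m) x = x" "0 < m"
  shows "x \<in> orbit f x"
  using assms by (auto simp: orbit_altdef intro!: exI[where x=m])

lemma orbits_disjoint_if_neq:
  assumes "x \<in> orbit f x" "y \<in> orbit f y" "orbit f x \<noteq> orbit f y"
  shows "orbit f x \<inter> orbit f y = {}"
proof (rule ccontr)
  assume "orbit f x \<inter> orbit f y \<noteq> {}"
  then obtain z where "z \<in> orbit f x" "z \<in> orbit f y"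
    by blast
  then have "orbit f x = orbit f z" "orbit f y = orbit f z"
    using assms(1,2) orbit_eq_if_mem by metis+
  with assms(3) show False
    by simp
qed

lemma orbit_eq_perm_cycle:
  assumes "permutation f" "C \<in> perm_cycles n f" "z \<in> C"
  shows "orbit f z = C"
  using assms orbit_eq_if_mem[OF permutation_self_in_orbit[OF assms(1)]]
  by (auto simp: perm_cycles_def)

lemma card_orbit_eq_least_power:
  assumes "(f ^^ m) x = x" "0 < m"
  shows "card (orbit f x) = least_power f x"
proof -
  have x_in: "x \<in> orbit f x"
    using assms by (rule self_in_orbit_if_funpow_eq)
  have "card (orbit f x) = funpow_dist1 f x x"
    by (simp add: orbit_conv_funpow_dist1[OF x_in] card_image inj_on_funpow_dist1[OF x_in])
  moreover have "funpow_dist1 f x x \<le> least_power f x"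
    using least_powerI[OF assms] x_in by (intro funpow_dist1_le_self)
  moreover have "least_power f x \<le> funpow_dist1 f x x"
    using funpow_dist1_prop[OF x_in] by (intro least_power_le) simp_all
  ultimately show ?thesis
    by linarith
qed

lemma exact_period_card_orbit:
  assumes "permutation f"
  shows "exact_period f (card (orbit f x)) x"
proof -
  have "card (orbit f x) = least_power f x"
    using least_power_of_permutation[OF assms] by (intro card_orbit_eq_least_power)
  then show ?thesis
    by (simp add: exact_period_def least_power_dvd[OF assms])
qed

lemma card_orbit_eq_1_iff:
  assumes "permutation f"
  shows "card (orbit f x) = 1 \<longleftrightarrow> f x = x"
  using eq_on_cyclic_on_iff1[OF cyclic_on_orbit'[OF assms] permutation_self_in_orbit[OF assms]]
  by metis

lemma dvd_card_if_exact_period: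
  assumes "finite V" "f ` V \<subseteq> V" "0 < p"
    and period: "\<And>x. x \<in> V \<Longrightarrow> exact_period f p x"
  shows "p dvd card V"
proof -
  have fp: "(f ^^ p) x = x" if "x \<in> V" for x
    using period[OF that] by (simp add: exact_period_def)
  have self_in: "x \<in> orbit f x" if "x \<in> V" for x
    using fp[OF that] \<open>0 < p\<close> by (rule self_in_orbit_if_funpow_eq)
  have card_orbit: "card (orbit f x) = p" if "x \<in> V" for x
  proof -
    note fp = fp[OF that]
    have "p dvd least_power f x"
      using period[OF that] least_powerI(1)[OF fp \<open>0 < p\<close>] by (simp add: exact_period_def)
    then have "least_power f x = p"
      using least_power_minimal[OF fp] by (simp add: dvd_antisym)
    then show ?thesis
      using card_orbit_eq_least_power[OF fp \<open>0 < p\<close>] by simp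
  qed
  have orbit_subset: "orbit f x \<subseteq> V" if "x \<in> V" for x
  proof
    fix y assume "y \<in> orbit f x"
    then show "y \<in> V"
      by induction (use that assms(2) in auto)
  qed
  have union: "\<Union> (orbit f ` V) = V"
    using orbit_subset self_in by blast
  have "p * card (orbit f ` V) = card (\<Union> (orbit f ` V))"
  proof (rule card_partition)
    show "finite (orbit f ` V)" "finite (\<Union> (orbit f ` V))"
      using assms(1) union by simp_all
    show "\<And>C. C \<in> orbit f ` V \<Longrightarrow> card C = p"
      using card_orbit by blast
    show "C1 \<inter> C2 = {}" if C12: "C1 \<in> orbit f ` V" "C2 \<in> orbit f ` V" "C1 \<noteq> C2" for C1 C2
    proof -
      obtain a b where "a \<in> V" "b \<in> V" "C1 = orbit f a" "C2 = orbit f b"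
        using C12(1,2) by blast
      then show ?thesis
        using C12(3) by (simp add: orbits_disjoint_if_neq self_in)
    qed
  qed
  then show ?thesis
    unfolding union by (rule dvdI[OF sym])
qed

lemma involution_fixpoint_if_odd_card:
  assumes "finite V" "f ` V \<subseteq> V" "\<And>x. x \<in> V \<Longrightarrow> f (f x) = x" "odd (card V)"
  shows "\<exists>x\<in>V. f x = x"
proof (rule ccontr)
  assume no_fixpoint: "\<not> (\<exists>x\<in>V. f x = x)"
  have "exact_period f 2 x" if "x \<in> V" for x
    unfolding exact_period_def
  proof
    fix j
    have "(f ^^ j) x = (f ^^ (j mod 2)) x"
      using assms(3)[OF that] by (simp add: funpow_mod_eq numeral_2_eq_2)
    then show "(f ^^ j) x = x \<longleftrightarrow> 2 dvd j"
      using no_fixpoint that by (cases "even j") (auto simp: mod_2_eq_odd)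
  qed
  then have "2 dvd card V"
    using assms(1,2) by (intro dvd_card_if_exact_period) auto
  with assms(4) show False
    by simp
qed

lemma dvd_mult_iff_lcm_eq:
  fixes c p k :: nat
  assumes "0 < c"
  shows "(\<forall>j. p dvd c * j \<longleftrightarrow> k dvd j) \<longleftrightarrow> lcm c p = c * k"
proof -
  obtain q where q: "lcm c p = c * q"
    by (metis dvd_lcm1 dvdE)
  have "p dvd c * j \<longleftrightarrow> q dvd j" for j
    using assms by (metis lcm_least_iff q dvd_triv_left nat_mult_dvd_cancel_disj neq0_conv)
  then have "(\<forall>j. p dvd c * j \<longleftrightarrow> k dvd j) \<longleftrightarrow> (\<forall>j. q dvd j \<longleftrightarrow> k dvd j)"
    by simp
  also have "\<dots> \<longleftrightarrow> q = k"
    by (metis dvd_antisym dvd_refl)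
  finally show ?thesis
    using assms q by simp
qed

lemma exact_period_funpow_iff_lcm:
  assumes "permutation f" "0 < c"
  shows "exact_period (f ^^ c) k y \<longleftrightarrow> lcm c (card (orbit f y)) = c * k"
  using exact_period_card_orbit[OF assms(1), of y] dvd_mult_iff_lcm_eq[OF assms(2)]
  by (simp add: exact_period_def funpow_mult)

lemma card_points_on_cycles_of_length:
  assumes "f permutes {..<n}"
  shows "card {y. y < n \<and> card (orbit f y) = d} = d * card {C \<in> perm_cycles n f. card C = d}"
proof -
  have perm: "permutation f"
    using assms by (auto simp: permutation_permutes)
  define CC where "CC = {C \<in> perm_cycles n f. card C = d}"
  have orbit_less: "orbit f x \<subseteq> {..<n}" if "x < n" for x
    using permutes_orbit_subset[OF assms] that by simp
  have "\<Union> CC = {y. y < n \<and> card (orbit f y) = d}"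
  proof (intro set_eqI iffI)
    fix y assume "y \<in> \<Union> CC"
    then obtain x where "x < n" "y \<in> orbit f x" "card (orbit f x) = d"
      by (auto simp: CC_def perm_cycles_def)
    then show "y \<in> {y. y < n \<and> card (orbit f y) = d}"
      using orbit_less orbit_eq_if_mem[OF permutation_self_in_orbit[OF perm]] by auto
  next
    fix y assume "y \<in> {y. y < n \<and> card (orbit f y) = d}"
    then show "y \<in> \<Union> CC"
      using permutation_self_in_orbit[OF perm] by (auto simp: CC_def perm_cycles_def)
  qed
  moreover have "d * card CC = card (\<Union> CC)"
  proof (rule card_partition)
    show "finite CC"
      by (simp add: CC_def perm_cycles_def)
    show "finite (\<Union> CC)"
      using orbit_less by (auto simp: CC_def perm_cycles_def intro: finite_subset)
    show "\<And>C. C \<in> CC \<Longrightarrow> card C = d"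
      by (simp add: CC_def)
    show "C1 \<inter> C2 = {}" if C12: "C1 \<in> CC" "C2 \<in> CC" "C1 \<noteq> C2" for C1 C2
    proof -
      obtain a b where "C1 = orbit f a" "C2 = orbit f b"
        using C12(1,2) by (auto simp: CC_def perm_cycles_def)
      then show ?thesis
        using C12(3) orbits_disjoint_if_neq permutation_self_in_orbit[OF perm] by metis
    qed
  qed
  ultimately show ?thesis
    by (simp add: CC_def)
qed

locale autoparatopic_latin_square =
  fixes n :: nat and T :: "(nat \<times> nat \<times> nat) set" and \<beta> \<gamma> :: "nat \<Rightarrow> nat"
  assumes latin: "latin_square n T"
    and \<beta>_permutes: "\<beta> permutes {..<n}"
    and \<gamma>_permutes: "\<gamma> permutes {..<n}"
    and autoparatopic: "paratopism12_image id \<beta> \<gamma> T = T"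
begin

lemma permutation_\<beta>: "permutation \<beta>"
  using \<beta>_permutes by (auto simp: permutation_permutes)

lemma permutation_\<gamma>: "permutation \<gamma>"
  using \<gamma>_permutes by (auto simp: permutation_permutes)

lemma funpow_\<beta>_less_iff: "(\<beta> ^^ j) x < n \<longleftrightarrow> x < n"
  using permutes_in_image[OF \<beta>_permutes] by (induction j) simp_all

lemma inj_funpow_\<beta>: "inj (\<beta> ^^ j)"
  using permutes_inj[OF \<beta>_permutes] by (rule inj_fn)

lemma cell_less:
  assumes "(x, y, z) \<in> T"
  shows "x < n" "y < n" "z < n"
  using assms latin by (auto simp: latin_square_def)

lemma symbol_ex1: "x < n \<Longrightarrow> y < n \<Longrightarrow> \<exists>!z. (x, y, z) \<in> T"
  using latin unfolding latin_square_def by (elim conjE) simp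

lemma column_ex1: "x < n \<Longrightarrow> z < n \<Longrightarrow> \<exists>!y. (x, y, z) \<in> T"
  using latin unfolding latin_square_def by (elim conjE) simp

lemma symbol_unique:
  assumes "(x, y, z) \<in> T" "(x, y, z') \<in> T"
  shows "z = z'"
  using symbol_ex1[OF cell_less(1,2)[OF assms(1)]] assms by blast

lemma autoparatopic_cell:
  assumes "(x, y, z) \<in> T"
  shows "(\<beta> y, x, \<gamma> z) \<in> T"
proof -
  have "(\<beta> y, id x, \<gamma> z) \<in> paratopism12_image id \<beta> \<gamma> T"
    unfolding paratopism12_image_def using assms by blast
  then show ?thesis
    using autoparatopic by simp
qed

lemma autoparatopic_cell_funpow:
  assumes "(x, y, z) \<in> T"
  shows "((\<beta> ^^ j) x, (\<beta> ^^ j) y, (\<gamma> ^^ (2 * j)) z) \<in> T"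
proof (induction j)
  case 0
  show ?case
    using assms by simp
next
  case (Suc j)
  show ?case
    using autoparatopic_cell[OF autoparatopic_cell[OF Suc.IH]] by simp
qed

lemma diagonal_symbol_fixed:
  assumes "(x, x, z) \<in> T" "\<beta> x = x"
  shows "\<gamma> z = z"
  using symbol_unique[OF autoparatopic_cell[OF assms(1), unfolded assms(2)] assms(1)] .

text \<open>With x2 = \<beta>^i x1, the map \<sigma>^(2i) moves the first cell into row x2; the anchoring forces its
  column to be y2, so it is the second cell.\<close>

lemma anchored_cells_same_cycle:
  assumes cell1: "(x1, y1, z1) \<in> T" and cell2: "(x2, y2, z2) \<in> T"
    and anchored1: "x1 = (\<beta> ^^ h) y1" and anchored2: "x2 = (\<beta> ^^ h) y2"
    and same_cycle: "x2 \<in> orbit \<beta> x1"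
  shows "orbit \<gamma> z2 = orbit \<gamma> z1"
proof -
  obtain i where i: "x2 = (\<beta> ^^ i) x1"
    using same_cycle by (auto simp: orbit_altdef_permutation[OF permutation_\<beta>])
  have "(\<beta> ^^ h) y2 = (\<beta> ^^ h) ((\<beta> ^^ i) y1)"
    using anchored1 anchored2 i by (simp add: funpow_apply_funpow add.commute)
  then have y2: "y2 = (\<beta> ^^ i) y1"
    using inj_funpow_\<beta> by (metis injD)
  have "(x2, y2, (\<gamma> ^^ (2 * i)) z1) \<in> T"
    using autoparatopic_cell_funpow[OF cell1, of i] i y2 by simp
  then have "z2 = (\<gamma> ^^ (2 * i)) z1"
    by (rule symbol_unique[OF cell2])
  then have "z2 \<in> orbit \<gamma> z1"
    by (auto simp: orbit_altdef_permutation[OF permutation_\<gamma>])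
  then show ?thesis
    by (rule orbit_eq_if_mem[OF permutation_self_in_orbit[OF permutation_\<gamma>]])
qed

lemma card_anchored_cycles_le:
  "card {C \<in> perm_cycles n \<gamma>. \<exists>x y z. z \<in> C \<and> (x, y, z) \<in> T \<and> card (orbit \<beta> x) = d \<and> x = (\<beta> ^^ h) y}
     \<le> card {D \<in> perm_cycles n \<beta>. card D = d}"
  (is "card ?A \<le> card ?B")
proof (rule card_le_if_inj_on_rel
    [where r = "\<lambda>C D. \<exists>x y z. x \<in> D \<and> z \<in> C \<and> (x, y, z) \<in> T \<and> x = (\<beta> ^^ h) y"])
  show "finite ?B"
    by (simp add: perm_cycles_def)
  show "\<exists>D. D \<in> ?B \<and> (\<exists>x y z. x \<in> D \<and> z \<in> C \<and> (x, y, z) \<in> T \<and> x = (\<beta> ^^ h) y)"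
    if C: "C \<in> ?A" for C
  proof -
    obtain x y z where cell: "z \<in> C" "(x, y, z) \<in> T" "card (orbit \<beta> x) = d" "x = (\<beta> ^^ h) y"
      using C by blast
    moreover have "orbit \<beta> x \<in> perm_cycles n \<beta>"
      using cell_less(1)[OF cell(2)] by (simp add: perm_cycles_def)
    ultimately show ?thesis
      using permutation_self_in_orbit[OF permutation_\<beta>, of x] by blast
  qed
  show "C1 = C2"
    if C: "C1 \<in> ?A" "C2 \<in> ?A" "D \<in> ?B"
      and related1: "\<exists>x y z. x \<in> D \<and> z \<in> C1 \<and> (x, y, z) \<in> T \<and> x = (\<beta> ^^ h) y"
      and related2: "\<exists>x y z. x \<in> D \<and> z \<in> C2 \<and> (x, y, z) \<in> T \<and> x = (\<beta> ^^ h) y"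
    for C1 C2 D
  proof -
    obtain x1 y1 z1 where 1: "x1 \<in> D" "z1 \<in> C1" "(x1, y1, z1) \<in> T" "x1 = (\<beta> ^^ h) y1"
      using related1 by blast
    obtain x2 y2 z2 where 2: "x2 \<in> D" "z2 \<in> C2" "(x2, y2, z2) \<in> T" "x2 = (\<beta> ^^ h) y2"
      using related2 by blast
    have "orbit \<beta> x1 = D"
      using C(3) 1(1) orbit_eq_perm_cycle[OF permutation_\<beta>] by blast
    then have "x2 \<in> orbit \<beta> x1"
      using 2(1) by simp
    then have "orbit \<gamma> z2 = orbit \<gamma> z1"
      by (rule anchored_cells_same_cycle[OF 1(3) 2(3) 1(4) 2(4)])
    moreover have "orbit \<gamma> z1 = C1" "orbit \<gamma> z2 = C2"
      using C(1,2) 1(2) 2(2) orbit_eq_perm_cycle[OF permutation_\<gamma>] by blast+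
    ultimately show ?thesis
      by simp
  qed
qed

end

locale odd_cycle_symbol = autoparatopic_latin_square +
  fixes z0 :: nat
  assumes z0_less: "z0 < n"
    and odd_cycle: "odd (card (orbit \<gamma> z0))"
begin

abbreviation c :: nat where
  "c \<equiv> card (orbit \<gamma> z0)"

lemma funpow_\<gamma>_c_mult: "(\<gamma> ^^ (c * j)) z0 = z0"
  using exact_period_card_orbit[OF permutation_\<gamma>, of z0] by (simp add: exact_period_def)

definition col :: "nat \<Rightarrow> nat" where
  "col x = (THE y. (x, y, z0) \<in> T)"

lemma col_cell: "x < n \<Longrightarrow> (x, col x, z0) \<in> T"
  unfolding col_def by (rule theI'[OF column_ex1[OF _ z0_less]])

lemma col_eqI:
  assumes "(x, y, z0) \<in> T"
  shows "col x = y"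
  unfolding col_def by (rule the1_equality[OF column_ex1[OF cell_less(1)[OF assms] z0_less] assms])

lemma col_less: "x < n \<Longrightarrow> col x < n"
  by (rule cell_less(2)[OF col_cell])

lemma col_funpow_\<beta>_c_mult:
  assumes "x < n"
  shows "col ((\<beta> ^^ (c * j)) x) = (\<beta> ^^ (c * j)) (col x)"
proof (rule col_eqI)
  have "((\<beta> ^^ (c * j)) x, (\<beta> ^^ (c * j)) (col x), (\<gamma> ^^ (c * (2 * j))) z0) \<in> T"
    using autoparatopic_cell_funpow[OF col_cell[OF assms], of "c * j"] by (simp add: mult.left_commute)
  then show "((\<beta> ^^ (c * j)) x, (\<beta> ^^ (c * j)) (col x), z0) \<in> T"
    by (simp only: funpow_\<gamma>_c_mult)
qed

text \<open>\<tau> x is the row of the image under \<sigma>^c of the cell of z0 in row x.\<close>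

definition \<tau> :: "nat \<Rightarrow> nat" where
  "\<tau> x = (\<beta> ^^ (c div 2 + 1)) (col x)"

lemma \<tau>_less: "x < n \<Longrightarrow> \<tau> x < n"
  unfolding \<tau>_def funpow_\<beta>_less_iff by (rule col_less)

lemma col_\<tau>:
  assumes "x < n"
  shows "col (\<tau> x) = (\<beta> ^^ (c div 2)) x"
proof (rule col_eqI)
  have "((\<beta> ^^ (c div 2)) x, (\<beta> ^^ (c div 2)) (col x), (\<gamma> ^^ (2 * (c div 2))) z0) \<in> T"
    by (rule autoparatopic_cell_funpow[OF col_cell[OF assms]])
  then have "(\<tau> x, (\<beta> ^^ (c div 2)) x, (\<gamma> ^^ Suc (2 * (c div 2))) z0) \<in> T"
    using autoparatopic_cell by (simp add: \<tau>_def)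
  moreover have "Suc (2 * (c div 2)) = c * 1"
    using odd_cycle by simp
  ultimately show "(\<tau> x, (\<beta> ^^ (c div 2)) x, z0) \<in> T"
    by (simp only: funpow_\<gamma>_c_mult)
qed

lemma \<tau>_\<tau>:
  assumes "x < n"
  shows "\<tau> (\<tau> x) = (\<beta> ^^ c) x"
proof -
  have "\<tau> (\<tau> x) = (\<beta> ^^ (c div 2 + 1 + c div 2)) x"
    by (simp only: \<tau>_def[of "\<tau> x"] col_\<tau>[OF assms] funpow_apply_funpow)
  also have "c div 2 + 1 + c div 2 = c"
    using odd_two_times_div_two_succ[OF odd_cycle] by linarith
  finally show ?thesis .
qed

lemma inj_on_\<tau>: "inj_on \<tau> {..<n}"
proof (rule inj_onI)
  fix x y
  assume "x \<in> {..<n}" "y \<in> {..<n}" "\<tau> x = \<tau> y"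
  then have "(\<beta> ^^ c) x = (\<beta> ^^ c) y"
    using \<tau>_\<tau> by (metis lessThan_iff)
  then show "x = y"
    using inj_funpow_\<beta> by (metis injD)
qed

lemma \<tau>_funpow_\<beta>_c_mult:
  assumes "x < n"
  shows "\<tau> ((\<beta> ^^ (c * j)) x) = (\<beta> ^^ (c * j)) (\<tau> x)"
  unfolding \<tau>_def col_funpow_\<beta>_c_mult[OF assms] funpow_apply_funpow by (simp only: add.commute)

lemma funpow_\<tau>_double:
  assumes "x < n"
  shows "(\<tau> ^^ (2 * j)) x = (\<beta> ^^ (c * j)) x"
proof (induction j)
  case 0
  show ?case
    by simp
next
  case (Suc j)
  have "(\<tau> ^^ (2 * Suc j)) x = \<tau> (\<tau> ((\<tau> ^^ (2 * j)) x))"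
    by simp
  also have "\<dots> = (\<beta> ^^ c) ((\<beta> ^^ (c * j)) x)"
    using Suc.IH \<tau>_\<tau> funpow_\<beta>_less_iff assms by simp
  also have "\<dots> = (\<beta> ^^ (c * Suc j)) x"
    by (simp add: funpow_apply_funpow)
  finally show ?case .
qed

lemma funpow_\<tau>_odd:
  assumes "x < n"
  shows "(\<tau> ^^ (2 * j + 1)) x = (\<beta> ^^ (c * j + c div 2 + 1)) (col x)"
proof -
  have "(\<tau> ^^ (2 * j + 1)) x = \<tau> ((\<beta> ^^ (c * j)) x)"
    using funpow_\<tau>_double[OF assms] by simp
  also have "\<dots> = (\<beta> ^^ (c * j)) (\<tau> x)"
    by (rule \<tau>_funpow_\<beta>_c_mult[OF assms])
  also have "\<dots> = (\<beta> ^^ (c * j + c div 2 + 1)) (col x)"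
    by (simp only: \<tau>_def funpow_apply_funpow add.assoc)
  finally show ?thesis .
qed

definition period_class :: "nat \<Rightarrow> nat set" where
  "period_class k = {y. y < n \<and> exact_period (\<beta> ^^ c) k y}"

lemma finite_period_class: "finite (period_class k)"
  by (rule finite_subset[of _ "{..<n}"]) (auto simp: period_class_def)

lemma \<tau>_period_class: "\<tau> ` period_class k \<subseteq> period_class k"
proof
  fix y
  assume "y \<in> \<tau> ` period_class k"
  then obtain x where x: "x \<in> period_class k" and y: "y = \<tau> x"
    by blast
  have xn: "x < n"
    using x by (simp add: period_class_def)
  have "(\<beta> ^^ (c * j)) (\<tau> x) = \<tau> x \<longleftrightarrow> (\<beta> ^^ (c * j)) x = x" for j
  proof -
    have "(\<beta> ^^ (c * j)) (\<tau> x) = \<tau> x \<longleftrightarrow> \<tau> ((\<beta> ^^ (c * j)) x) = \<tau> x"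
      by (simp only: \<tau>_funpow_\<beta>_c_mult[OF xn])
    also have "\<dots> \<longleftrightarrow> (\<beta> ^^ (c * j)) x = x"
      using xn by (intro inj_on_eq_iff[OF inj_on_\<tau>]) (simp_all add: funpow_\<beta>_less_iff)
    finally show ?thesis .
  qed
  then show "y \<in> period_class k"
    using x y \<tau>_less[OF xn] by (simp add: period_class_def exact_period_def funpow_mult)
qed

lemma two_mult_dvd_card_period_class:
  assumes "even k" "0 < k"
  shows "2 * k dvd card (period_class k)"
proof (rule dvd_card_if_exact_period[OF finite_period_class \<tau>_period_class])
  show "0 < 2 * k"
    using assms(2) by simp
  show "exact_period \<tau> (2 * k) x" if "x \<in> period_class k" for x
    unfolding exact_period_def
  proof
    fix j
    have xn: "x < n" and period: "\<And>i. (\<beta> ^^ (c * i)) x = x \<longleftrightarrow> k dvd i"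
      using that by (simp_all add: period_class_def exact_period_def funpow_mult)
    have double: "(\<tau> ^^ (2 * i)) x = x \<longleftrightarrow> k dvd i" for i
      using period funpow_\<tau>_double[OF xn] by simp
    show "(\<tau> ^^ j) x = x \<longleftrightarrow> 2 * k dvd j"
    proof (cases "even j")
      case True
      then obtain i where "j = 2 * i"
        by blast
      then show ?thesis
        using double by simp
    next
      case False
      have "(\<tau> ^^ j) x \<noteq> x"
      proof
        assume "(\<tau> ^^ j) x = x"
        then have "(\<tau> ^^ (2 * j)) x = x"
          by (simp add: mult_2 funpow_apply_funpow[symmetric])
        then have "k dvd j"
          using double by simp
        with False assms(1) show False
          using dvd_trans by blast
      qed
      moreover have "\<not> 2 * k dvd j"
        using False dvd_trans dvd_triv_left by blast
      ultimately show ?thesis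
        by simp
    qed
  qed
qed

lemma period_class_fixpoint:
  assumes "odd (card (period_class k))"
  shows "\<exists>x\<in>period_class k. (\<tau> ^^ k) x = x"
proof (rule involution_fixpoint_if_odd_card[OF finite_period_class _ _ assms])
  have "(\<tau> ^^ j) x \<in> period_class k" if "x \<in> period_class k" for x j
    using that \<tau>_period_class by (induction j) auto
  then show "(\<tau> ^^ k) ` period_class k \<subseteq> period_class k"
    by blast
  show "(\<tau> ^^ k) ((\<tau> ^^ k) x) = x" if "x \<in> period_class k" for x
  proof -
    have "x < n" "(\<beta> ^^ (c * k)) x = x"
      using that by (simp_all add: period_class_def exact_period_def funpow_mult)
    then show ?thesis
      using funpow_\<tau>_double by (simp add: funpow_apply_funpow flip: mult_2)
  qed
qed

lemma period_class_eq:
  assumes "c * k = d" "1 < d"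
    and no_middle_cycle:
      "\<not> (\<exists>C' \<in> perm_cycles n \<beta>. 1 < card C' \<and> card C' < d \<and> lcm c (card C') = d)"
  shows "period_class k = {y. y < n \<and> card (orbit \<beta> y) = d} \<union>
           (if c = d then {x \<in> {..<n}. \<beta> x = x} else {})"
proof -
  have c_pos: "0 < c"
    using odd_cycle by (simp add: odd_pos)
  have "exact_period (\<beta> ^^ c) k y \<longleftrightarrow> card (orbit \<beta> y) = d \<or> (c = d \<and> \<beta> y = y)"
    if "y < n" for y
  proof -
    define p where "p = card (orbit \<beta> y)"
    have "exact_period (\<beta> ^^ c) k y \<longleftrightarrow> lcm c p = d"
      using exact_period_funpow_iff_lcm[OF permutation_\<beta> c_pos] assms(1) by (simp add: p_def)
    also have "\<dots> \<longleftrightarrow> p = d \<or> (c = d \<and> p = 1)"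
    proof
      assume lcm: "lcm c p = d"
      have "0 < p"
        using finite_subset[OF permutes_orbit_subset[OF \<beta>_permutes]] orbit_nonempty that
        by (simp add: p_def card_gt_0_iff)
      moreover have "p \<le> d"
        using lcm assms(2) by (metis dvd_imp_le dvd_lcm2 zero_less_one less_trans)
      moreover have "orbit \<beta> y \<in> perm_cycles n \<beta>"
        using that by (simp add: perm_cycles_def)
      then have "\<not> (1 < p \<and> p < d)"
        using no_middle_cycle lcm by (auto simp: p_def)
      ultimately have "p = 1 \<or> p = d"
        by linarith
      then show "p = d \<or> (c = d \<and> p = 1)"
        using lcm by auto
    next
      assume "p = d \<or> (c = d \<and> p = 1)"
      then show "lcm c p = d"
        using assms(1) by auto
    qed
    finally show ?thesis
      using card_orbit_eq_1_iff[OF permutation_\<beta>] by (simp add: p_def)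
  qed
  then show ?thesis
    by (auto simp: period_class_def)
qed

lemma card_period_class:
  assumes "c * k = d" "1 < d"
    and no_middle_cycle:
      "\<not> (\<exists>C' \<in> perm_cycles n \<beta>. 1 < card C' \<and> card C' < d \<and> lcm c (card C') = d)"
  shows "card (period_class k) = d * card {C \<in> perm_cycles n \<beta>. card C = d} +
           (if c = d then card {x \<in> {..<n}. \<beta> x = x} else 0)"
proof -
  have "card (orbit \<beta> y) \<noteq> d" if "\<beta> y = y" for y
    using card_orbit_eq_1_iff[OF permutation_\<beta>, of y] that assms(2) by simp
  then have "{y. y < n \<and> card (orbit \<beta> y) = d} \<inter> {x \<in> {..<n}. \<beta> x = x} = {}"
    by auto
  moreover have "finite {y. y < n \<and> card (orbit \<beta> y) = d}"
    by simp
  ultimately show ?thesis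
    using period_class_eq[OF assms] card_points_on_cycles_of_length[OF \<beta>_permutes, of d]
    by (simp add: card_Un_disjoint)
qed

lemma odd_if_odd_cycle_count:
  assumes "c * k = d" "1 < d"
    and no_middle_cycle:
      "\<not> (\<exists>C' \<in> perm_cycles n \<beta>. 1 < card C' \<and> card C' < d \<and> lcm c (card C') = d)"
    and odd_count: "odd (card {C \<in> perm_cycles n \<beta>. card C = d})"
  shows "odd d"
proof
  assume "even d"
  then have "even k" "c \<noteq> d"
    using assms(1) odd_cycle by auto
  have "0 < k"
    using assms(1,2) by (cases k) auto
  let ?r = "card {C \<in> perm_cycles n \<beta>. card C = d}"
  have "card (period_class k) = k * (c * ?r)"
    using card_period_class[OF assms(1-3)] \<open>c \<noteq> d\<close> by (simp flip: assms(1) add: ac_simps)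
  then have "k * 2 dvd k * (c * ?r)"
    using two_mult_dvd_card_period_class[OF \<open>even k\<close> \<open>0 < k\<close>] by (simp add: mult.commute)
  then have "2 dvd c * ?r"
    using \<open>0 < k\<close> by simp
  with odd_cycle odd_count show False
    by simp
qed

lemma anchored_cell_of_fixpoint:
  assumes "c * k = d" "1 < d" "odd d"
    and no_middle_cycle:
      "\<not> (\<exists>C' \<in> perm_cycles n \<beta>. 1 < card C' \<and> card C' < d \<and> lcm c (card C') = d)"
    and x: "x \<in> period_class k" "(\<tau> ^^ k) x = x"
  shows "card (orbit \<beta> x) = d \<and> x = (\<beta> ^^ (d div 2 + 1)) (col x)"
proof -
  have xn: "x < n"
    using x(1) by (simp add: period_class_def)
  obtain l where l: "k = 2 * l + 1"
    using assms(1,3) by (metis even_mult_iff oddE)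
  have "d = c + 2 * (c * l)"
    using assms(1) l by (simp add: algebra_simps)
  then have half: "c * l + c div 2 = d div 2"
    by simp
  have "x = (\<tau> ^^ (2 * l + 1)) x"
    using x(2) l by simp
  also have "\<dots> = (\<beta> ^^ (c * l + c div 2 + 1)) (col x)"
    by (rule funpow_\<tau>_odd[OF xn])
  finally have anchored: "x = (\<beta> ^^ (d div 2 + 1)) (col x)"
    by (simp only: half)
  have "card (orbit \<beta> x) = d"
  proof (rule ccontr)
    assume "card (orbit \<beta> x) \<noteq> d"
    then have fixed: "\<beta> x = x" and "c = d"
      using x(1) period_class_eq[OF assms(1,2) no_middle_cycle] by (auto split: if_splits)
    have "(\<beta> ^^ j) x = x" for j
      using fixed by (induction j) simp_all
    then have "col x = x"
      using anchored inj_funpow_\<beta> by (metis injD)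
    then have "\<gamma> z0 = z0"
      using diagonal_symbol_fixed col_cell[OF xn] fixed by metis
    then have "c = 1"
      using card_orbit_eq_1_iff[OF permutation_\<gamma>] by simp
    with \<open>c = d\<close> assms(2) show False
      by simp
  qed
  with anchored show ?thesis
    by simp
qed

lemma odd_and_anchored_cell:
  assumes "1 < d" "c dvd d"
    and odd_count: "odd (card {C \<in> perm_cycles n \<beta>. card C = d})"
    and no_middle_cycle:
      "\<not> (\<exists>C' \<in> perm_cycles n \<beta>. 1 < card C' \<and> card C' < d \<and> lcm c (card C') = d)"
    and fixpoints: "odd (card {x \<in> {..<n}. \<beta> x = x}) \<longrightarrow> c < d"
  shows "odd d \<and> (\<exists>x y. (x, y, z0) \<in> T \<and> card (orbit \<beta> x) = d \<and> x = (\<beta> ^^ (d div 2 + 1)) y)"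
proof -
  obtain k where k: "c * k = d"
    using assms(2) by (metis dvdE)
  have "odd d"
    by (rule odd_if_odd_cycle_count[OF k assms(1) no_middle_cycle odd_count])
  have "odd (card (period_class k))"
    using card_period_class[OF k assms(1) no_middle_cycle] \<open>odd d\<close> odd_count fixpoints by auto
  then obtain x where x: "x \<in> period_class k" "(\<tau> ^^ k) x = x"
    using period_class_fixpoint by blast
  then have "(x, col x, z0) \<in> T"
    by (intro col_cell) (simp add: period_class_def)
  with anchored_cell_of_fixpoint[OF k assms(1) \<open>odd d\<close> no_middle_cycle x] \<open>odd d\<close> show ?thesis
    by blast
qed

end

theorem theorem4p5:
  fixes n d :: nat and \<beta> \<gamma> :: "nat \<Rightarrow> nat"
  assumes par: "in_Par12 n id \<beta> \<gamma>"
    and d: "d > 1"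
    and r_odd: "odd (card {C \<in> perm_cycles n \<beta>. card C = d})"
  shows "let r = card {C \<in> perm_cycles n \<beta>. card C = d};
             \<Gamma> = {C \<in> perm_cycles n \<gamma>.
                    odd (card C) \<and> card C dvd d \<and>
                    \<not> (\<exists>C' \<in> perm_cycles n \<beta>. 1 < card C' \<and> card C' < d \<and> lcm (card C) (card C') = d) \<and>
                    (odd (card {x \<in> {..<n}. \<beta> x = x}) \<longrightarrow> card C < d)}
         in (even d \<longrightarrow> \<Gamma> = {}) \<and> (odd d \<longrightarrow> card \<Gamma> \<le> r)"
proof -
  obtain T where "autoparatopic_latin_square n T \<beta> \<gamma>"
    using par unfolding in_Par12_def autoparatopic_latin_square_def by blast
  then interpret autoparatopic_latin_square n T \<beta> \<gamma> .
  define \<Gamma> where "\<Gamma> = {C \<in> perm_cycles n \<gamma>.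
                    odd (card C) \<and> card C dvd d \<and>
                    \<not> (\<exists>C' \<in> perm_cycles n \<beta>. 1 < card C' \<and> card C' < d \<and> lcm (card C) (card C') = d) \<and>
                    (odd (card {x \<in> {..<n}. \<beta> x = x}) \<longrightarrow> card C < d)}"
  define A where "A = {C \<in> perm_cycles n \<gamma>.
    \<exists>x y z. z \<in> C \<and> (x, y, z) \<in> T \<and> card (orbit \<beta> x) = d \<and> x = (\<beta> ^^ (d div 2 + 1)) y}"
  have \<Gamma>_subset: "odd d \<and> C \<in> A" if C: "C \<in> \<Gamma>" for C
  proof -
    obtain z0 where z0: "z0 < n" "C = orbit \<gamma> z0"
      using C by (auto simp: \<Gamma>_def perm_cycles_def)
    interpret odd_cycle_symbol n T \<beta> \<gamma> z0
      using z0 C by unfold_locales (simp_all add: \<Gamma>_def)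
    have "odd d \<and> (\<exists>x y. (x, y, z0) \<in> T \<and> card (orbit \<beta> x) = d \<and> x = (\<beta> ^^ (d div 2 + 1)) y)"
      using C z0(2) by (intro odd_and_anchored_cell d r_odd) (simp_all add: \<Gamma>_def)
    then show ?thesis
      using C z0(2) permutation_self_in_orbit[OF permutation_\<gamma>, of z0]
      by (auto simp: A_def \<Gamma>_def)
  qed
  have "card \<Gamma> \<le> card A"
    using \<Gamma>_subset by (intro card_mono) (auto simp: A_def perm_cycles_def)
  also have "\<dots> \<le> card {C \<in> perm_cycles n \<beta>. card C = d}"
    unfolding A_def by (rule card_anchored_cycles_le)
  finally show ?thesis
    using \<Gamma>_subset unfolding Let_def \<Gamma>_def[symmetric] by blast
qed

end
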